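(* Let $\mathfrak g$ be a finite-dimensional perm algebra, $N$ a Nijenhuis operator on $\mathfrak g$, and $\mathfrak B$ a nondegenerate, skew-symmetric, invariant bilinear form on $\mathfrak g$ (so $(\mathfrak g,N,\mathfrak B)$ is a skew-symmetric NF perm algebra). Let $\widehat N$ be the adjoint of $N$ with respect to $\mathfrak B$, i.e. $\mathfrak B(N(x),y)=\mathfrak B(x,\widehat N(y))$ for all $x,y$. Then $(\mathfrak g^*,R^*-L^*,R^*,\widehat N^* )$ is a representation of $(\mathfrak g,N)$, and it is equivalent to the adjoint representation $(\mathfrak g,L,R,N)$, i.e. there is a linear isomorphism $\psi:\mathfrak g\to\mathfrak g^*$ with $\psi(xy)=(R^*-L^* )(x)\psi(y)$, $\psi(yx)=\psi(y)R^*(x)$ and $\psi(N(x))=\widehat N^*(\psi(x))$ for all $x,y$. Conversely, let $(\mathfrak g,N)$ be a finite-dimensional Nijenhuis perm algebra and $S:\mathfrak g\to\mathfrak g$ a linear map admissible to $(\mathfrak g,N)$; if the representation $(\mathfrak g^*,R^*-L^*,R^*,S^* )$ of $(\mathfrak g,N)$ is equivalent to $(\mathfrak g,L,R,N)$, then there is a nondegenerate invariant bilinear form $\mathfrak B$ on $\mathfrak g$ such that $(\mathfrak g,N,\mathfrak B)$ is an NF perm algebra with $\widehat N=S$.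
   Context: Over a field $K$. A (right) perm algebra: bilinear product with $(xy)z=x(yz)=x(zy)$; $L(x)y=xy$, $R(x)y=yx$. A representation $(V,\ell,r)$: linear $\ell,r:\mathfrak g\to\mathrm{End}(V)$, written $\ell(x)v$, $v\,r(x)$, with $v\,r(xy)=(v\,r(x))r(y)=(v\,r(y))r(x)$ and $\ell(xy)v=\ell(x)(\ell(y)v)=\ell(x)(v\,r(y))=(\ell(x)v)r(y)$. $(\mathfrak g,L,R)$ is a representation, with right action $y\,R(x)=yx$. Nijenhuis operator: $N(x)N(y)+N^2(xy)=N(N(x)y)+N(xN(y))$. A representation of $(\mathfrak g,N)$: $(V,\ell,r,\alpha)$ with $\ell(N(x))\alpha(v)+\alpha^2(\ell(x)v)=\alpha(\ell(N(x))v)+\alpha(\ell(x)\alpha(v))$ and $\alpha(v)r(N(x))+\alpha^2(v\,r(x))=\alpha(v\,r(N(x)))+\alpha(\alpha(v)r(x))$; $(\mathfrak g,L,R,N)$ is one. Dual maps: $\langle L^*(x)\xi,y\rangle=\langle\xi,xy\rangle$, $\langle\xi R^*(x),y\rangle=\langle\xi,yx\rangle$; in $(\mathfrak g^*,R^*-L^*,R^* )$ the left action is $(R^*-L^* )(x)\xi=\xi R^*(x)-L^*(x)\xi$ and the right action is $\xi R^*(x)$. $S^*$ is the dual map of $S$. A bilinear form $\mathfrak B$ on $\mathfrak g$ is invariant if $\mathfrak B(xy,z)=\mathfrak B(y,zx)-\mathfrak B(y,xz)$ for all $x,y,z$. An NF (Nijenhuis Frobenius) perm algebra is $(\mathfrak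 g,N,\mathfrak B)$ with $N$ a Nijenhuis operator and $\mathfrak B$ nondegenerate invariant. A linear $S:\mathfrak g\to\mathfrak g$ is admissible to $(\mathfrak g,N)$ if for all $x,y$: $S(N(x)y)+xS^2(y)-N(x)S(y)-S(xS(y))=0$ and $S(xN(y))+S^2(x)y-S(x)N(y)-S(S(x)y)=0$. *)

theory Defs
  imports "HOL-Analysis.Analysis"
begin

text \<open>The perm algebra g is modelled as K^n, i.e. the type 'k^'n with 'k a field and
 'n a finite index type.\<close>

definition lin_map :: "('k::field^'n \<Rightarrow> 'k^'n) \<Rightarrow> bool" where
  "lin_map f \<longleftrightarrow> Vector_Spaces.linear (*s) (*s) f"

definition lin_functional :: "('k::field^'n \<Rightarrow> 'k) \<Rightarrow> bool" where
  "lin_functional f \<longleftrightarrow> Vector_Spaces.linear (*s) (*) f"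

definition dual_space :: "('k::field^'n \<Rightarrow> 'k) set" where
  "dual_space = {\<xi>. lin_functional \<xi>}"

definition bilinear_prod :: "('k::field^'n \<Rightarrow> 'k^'n \<Rightarrow> 'k^'n) \<Rightarrow> bool" where
  "bilinear_prod m \<longleftrightarrow> (\<forall>x. lin_map (m x)) \<and> (\<forall>y. lin_map (\<lambda>x. m x y))"

definition perm_algebra :: "('k::field^'n \<Rightarrow> 'k^'n \<Rightarrow> 'k^'n) \<Rightarrow> bool" where
  "perm_algebra m \<longleftrightarrow> bilinear_prod m \<and>
     (\<forall>x y z. m (m x y) z = m x (m y z) \<and> m x (m y z) = m x (m z y))"

definition nijenhuis :: "('k::field^'n \<Rightarrow> 'k^'n \<Rightarrow> 'k^'n) \<Rightarrow> ('k^'n \<Rightarrow> 'k^'n) \<Rightarrow> bool" where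
  "nijenhuis m N \<longleftrightarrow> lin_map N \<and>
     (\<forall>x y. m (N x) (N y) + N (N (m x y)) = N (m (N x) y) + N (m x (N y)))"

definition bilinear_form :: "('k::field^'n \<Rightarrow> 'k^'n \<Rightarrow> 'k) \<Rightarrow> bool" where
  "bilinear_form B \<longleftrightarrow> (\<forall>x. lin_functional (B x)) \<and> (\<forall>y. lin_functional (\<lambda>x. B x y))"

definition nondegenerate :: "('k::field^'n \<Rightarrow> 'k^'n \<Rightarrow> 'k) \<Rightarrow> bool" where
  "nondegenerate B \<longleftrightarrow> (\<forall>x. (\<forall>y. B x y = 0) \<longrightarrow> x = 0) \<and> (\<forall>y. (\<forall>x. B x y = 0) \<longrightarrow> y = 0)"

definition skew_symmetric :: "('k::field^'n \<Rightarrow> 'k^'n \<Rightarrow> 'k) \<Rightarrow> bool" where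
  "skew_symmetric B \<longleftrightarrow> (\<forall>x y. B x y = - B y x)"

definition invariant_form :: "('k::field^'n \<Rightarrow> 'k^'n \<Rightarrow> 'k^'n) \<Rightarrow> ('k^'n \<Rightarrow> 'k^'n \<Rightarrow> 'k) \<Rightarrow> bool" where
  "invariant_form m B \<longleftrightarrow> (\<forall>x y z. B (m x y) z = B y (m z x) - B y (m x z))"

definition NF_perm_algebra ::
  "('k::field^'n \<Rightarrow> 'k^'n \<Rightarrow> 'k^'n) \<Rightarrow> ('k^'n \<Rightarrow> 'k^'n) \<Rightarrow> ('k^'n \<Rightarrow> 'k^'n \<Rightarrow> 'k) \<Rightarrow> bool" where
  "NF_perm_algebra m N B \<longleftrightarrow> perm_algebra m \<and> nijenhuis m N \<and> bilinear_form B \<and>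
     nondegenerate B \<and> invariant_form m B"

definition admissible ::
  "('k::field^'n \<Rightarrow> 'k^'n \<Rightarrow> 'k^'n) \<Rightarrow> ('k^'n \<Rightarrow> 'k^'n) \<Rightarrow> ('k^'n \<Rightarrow> 'k^'n) \<Rightarrow> bool" where
  "admissible m N S \<longleftrightarrow>
     (\<forall>x y. S (m (N x) y) + m x (S (S y)) - m (N x) (S y) - S (m x (S y)) = 0 \<and>
            S (m x (N y)) + m (S (S x)) y - m (S x) (N y) - S (m (S x) y) = 0)"

text \<open>Representation (V, l, r) of the perm algebra g on a vector space V given as a
 carrier set W inside a type 'w with addition add and scalar multiplication sc;
 l x v is the left action, r x v is the right action v r(x).\<close>
definition perm_rep ::
  "('w \<Rightarrow> 'w \<Rightarrow> 'w) \<Rightarrow> ('k::field \<Rightarrow> 'w \<Rightarrow> 'w) \<Rightarrow> 'w set \<Rightarrow>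
   ('k^'n \<Rightarrow> 'k^'n \<Rightarrow> 'k^'n) \<Rightarrow> ('k^'n \<Rightarrow> 'w \<Rightarrow> 'w) \<Rightarrow> ('k^'n \<Rightarrow> 'w \<Rightarrow> 'w) \<Rightarrow> bool" where
  "perm_rep add sc W m l r \<longleftrightarrow>
     (\<forall>x. \<forall>v\<in>W. l x v \<in> W \<and> r x v \<in> W) \<and>
     (\<forall>x. \<forall>v\<in>W. \<forall>w\<in>W. l x (add v w) = add (l x v) (l x w) \<and> r x (add v w) = add (r x v) (r x w)) \<and>
     (\<forall>x c. \<forall>v\<in>W. l x (sc c v) = sc c (l x v) \<and> r x (sc c v) = sc c (r x v)) \<and>
     (\<forall>x y. \<forall>v\<in>W. l (x + y) v = add (l x v) (l y v) \<and> r (x + y) v = add (r x v) (r y v)) \<and>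
     (\<forall>x c. \<forall>v\<in>W. l (c *s x) v = sc c (l x v) \<and> r (c *s x) v = sc c (r x v)) \<and>
     (\<forall>x y. \<forall>v\<in>W. r (m x y) v = r y (r x v) \<and> r y (r x v) = r x (r y v)) \<and>
     (\<forall>x y. \<forall>v\<in>W. l (m x y) v = l x (l y v) \<and> l x (l y v) = l x (r y v) \<and>
                    l x (r y v) = r y (l x v))"

definition nij_perm_rep ::
  "('w \<Rightarrow> 'w \<Rightarrow> 'w) \<Rightarrow> ('k::field \<Rightarrow> 'w \<Rightarrow> 'w) \<Rightarrow> 'w set \<Rightarrow>
   ('k^'n \<Rightarrow> 'k^'n \<Rightarrow> 'k^'n) \<Rightarrow> ('k^'n \<Rightarrow> 'k^'n) \<Rightarrow>
   ('k^'n \<Rightarrow> 'w \<Rightarrow> 'w) \<Rightarrow> ('k^'n \<Rightarrow> 'w \<Rightarrow> 'w) \<Rightarrow> ('w \<Rightarrow> 'w) \<Rightarrow> bool" where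
  "nij_perm_rep add sc W m N l r \<alpha> \<longleftrightarrow>
     perm_rep add sc W m l r \<and>
     (\<forall>v\<in>W. \<alpha> v \<in> W) \<and>
     (\<forall>v\<in>W. \<forall>w\<in>W. \<alpha> (add v w) = add (\<alpha> v) (\<alpha> w)) \<and>
     (\<forall>c. \<forall>v\<in>W. \<alpha> (sc c v) = sc c (\<alpha> v)) \<and>
     (\<forall>x. \<forall>v\<in>W. add (l (N x) (\<alpha> v)) (\<alpha> (\<alpha> (l x v))) = add (\<alpha> (l (N x) v)) (\<alpha> (l x (\<alpha> v)))) \<and>
     (\<forall>x. \<forall>v\<in>W. add (r (N x) (\<alpha> v)) (\<alpha> (\<alpha> (r x v))) = add (\<alpha> (r (N x) v)) (\<alpha> (r x (\<alpha> v))))"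

definition dual_add :: "('k::field^'n \<Rightarrow> 'k) \<Rightarrow> ('k^'n \<Rightarrow> 'k) \<Rightarrow> ('k^'n \<Rightarrow> 'k)" where
  "dual_add \<xi> \<eta> = (\<lambda>v. \<xi> v + \<eta> v)"

definition dual_scale :: "'k::field \<Rightarrow> ('k^'n \<Rightarrow> 'k) \<Rightarrow> ('k^'n \<Rightarrow> 'k)" where
  "dual_scale c \<xi> = (\<lambda>v. c * \<xi> v)"

definition Lstar :: "('k::field^'n \<Rightarrow> 'k^'n \<Rightarrow> 'k^'n) \<Rightarrow> 'k^'n \<Rightarrow> ('k^'n \<Rightarrow> 'k) \<Rightarrow> ('k^'n \<Rightarrow> 'k)" where
  "Lstar m x \<xi> = (\<lambda>y. \<xi> (m x y))"

definition Rstar :: "('k::field^'n \<Rightarrow> 'k^'n \<Rightarrow> 'k^'n) \<Rightarrow> 'k^'n \<Rightarrow> ('k^'n \<Rightarrow> 'k) \<Rightarrow> ('k^'n \<Rightarrow> 'k)" where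
  "Rstar m x \<xi> = (\<lambda>y. \<xi> (m y x))"

definition RLstar :: "('k::field^'n \<Rightarrow> 'k^'n \<Rightarrow> 'k^'n) \<Rightarrow> 'k^'n \<Rightarrow> ('k^'n \<Rightarrow> 'k) \<Rightarrow> ('k^'n \<Rightarrow> 'k)" where
  "RLstar m x \<xi> = (\<lambda>y. Rstar m x \<xi> y - Lstar m x \<xi> y)"

definition dual_map :: "('k::field^'n \<Rightarrow> 'k^'n) \<Rightarrow> ('k^'n \<Rightarrow> 'k) \<Rightarrow> ('k^'n \<Rightarrow> 'k)" where
  "dual_map S \<xi> = (\<lambda>y. \<xi> (S y))"

definition equiv_to_adjoint ::
  "('k::field^'n \<Rightarrow> 'k^'n \<Rightarrow> 'k^'n) \<Rightarrow> ('k^'n \<Rightarrow> 'k^'n) \<Rightarrow> ('k^'n \<Rightarrow> 'k^'n) \<Rightarrow> bool" where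
  "equiv_to_adjoint m N S \<longleftrightarrow>
     (\<exists>\<psi> :: 'k^'n \<Rightarrow> ('k^'n \<Rightarrow> 'k).
        (\<forall>x y. \<psi> (x + y) = dual_add (\<psi> x) (\<psi> y)) \<and>
        (\<forall>c x. \<psi> (c *s x) = dual_scale c (\<psi> x)) \<and>
        bij_betw \<psi> UNIV dual_space \<and>
        (\<forall>x y. \<psi> (m x y) = RLstar m x (\<psi> y) \<and> \<psi> (m y x) = Rstar m x (\<psi> y) \<and>
               \<psi> (N x) = dual_map S (\<psi> x)))"

end

theory Submission
  imports Defs
begin

text \<open>A bilinear form B on g is the same thing as the linear map x \<mapsto> B(x,-) from g to g*,
  and in finite dimension B is nondegenerate exactly when this map is an isomorphism. Invariance
  of B says that x \<mapsto> B(x,-) carries L to R* - L*; together with skew-symmetry it also carries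
  R to R*, and B(N x, y) = B(x, Nhat y) says that it carries N to Nhat*. Transporting the adjoint
  representation (g, L, R, N) along this isomorphism shows that (g*, R* - L*, R*, Nhat*) is a
  representation equivalent to it. Conversely, an intertwining isomorphism \<psi> is itself a
  nondegenerate invariant form B(x,y) = \<psi>(x)(y), whose adjoint of N is S.\<close>

lemma lin_functional_iff:
  "lin_functional (f :: 'k::field^'n \<Rightarrow> 'k) \<longleftrightarrow>
     (\<forall>x y. f (x + y) = f x + f y) \<and> (\<forall>c x. f (c *s x) = c * f x)"
proof -
  have "vector_space ((*) :: 'k \<Rightarrow> 'k \<Rightarrow> 'k)"
    by unfold_locales (auto simp: algebra_simps)
  then show ?thesis
    unfolding lin_functional_def Vector_Spaces.linear_iff using vec.vector_space_axioms by blast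
qed

lemma lin_map_iff:
  "lin_map (f :: 'k::field^'n \<Rightarrow> 'k^'n) \<longleftrightarrow>
     (\<forall>x y. f (x + y) = f x + f y) \<and> (\<forall>c x. f (c *s x) = c *s f x)"
  unfolding lin_map_def Vector_Spaces.linear_iff using vec.vector_space_axioms by blast

lemma lin_functional_axis_expansion:
  assumes f: "lin_functional f"
  shows "f v = (\<Sum>i\<in>UNIV. v $ i * f (axis i 1))"
proof -
  have add: "f (x + y) = f x + f y" and scale: "f (c *s x) = c * f x" for x y c
    using f by (auto simp: lin_functional_iff)
  have "f 0 = 0"
    using scale[of 0 0] by simp
  then have "f (\<Sum>i\<in>A. v $ i *s axis i 1) = (\<Sum>i\<in>A. v $ i * f (axis i 1))" for A
    by (induction A rule: infinite_finite_induct) (simp_all add: add scale)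
  from this[of UNIV] show ?thesis by (simp add: basis_expansion)
qed

lemma lin_functional_eq_axisI:
  assumes "lin_functional f" "lin_functional g" "\<And>i. f (axis i 1) = g (axis i 1)"
  shows "f = g"
proof
  fix v
  show "f v = g v"
    using lin_functional_axis_expansion[OF assms(1), of v]
      lin_functional_axis_expansion[OF assms(2), of v] assms(3) by simp
qed

lemma bilinear_form_iff_linear_to_dual:
  "bilinear_form B \<longleftrightarrow> range B \<subseteq> dual_space \<and>
     (\<forall>x y. B (x + y) = dual_add (B x) (B y)) \<and> (\<forall>c x. B (c *s x) = dual_scale c (B x))"
  unfolding bilinear_form_def dual_space_def lin_functional_iff dual_add_def dual_scale_def
  by (auto simp: fun_eq_iff image_subset_iff)

lemma bilinear_form_represents_functional:
  fixes B :: "'k::field^'n \<Rightarrow> 'k^'n \<Rightarrow> 'k"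
  assumes B: "bilinear_form B" and nondeg: "\<And>x. \<forall>y. B x y = 0 \<Longrightarrow> x = 0"
    and \<xi>: "lin_functional \<xi>"
  shows "\<exists>x. B x = \<xi>"
proof -
  have lin: "lin_functional (B x)" "lin_functional (\<lambda>x. B x y)" for x y
    using B by (auto simp: bilinear_form_def)
  define \<Phi> where "\<Phi> x = (\<chi> i. B x (axis i 1))" for x
  have "lin_map \<Phi>"
    using lin(2) by (auto simp: lin_map_iff lin_functional_iff \<Phi>_def vec_eq_iff)
  moreover have "inj \<Phi>"
  proof (rule injI)
    fix x y assume "\<Phi> x = \<Phi> y"
    then have "B x = B y"
      by (intro lin_functional_eq_axisI lin) (simp add: \<Phi>_def vec_eq_iff)
    moreover have "B (x - y) z + B y z = B x z" for z
      using lin(2)[of z] unfolding lin_functional_iff by (metis diff_add_cancel)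
    ultimately have "\<forall>z. B (x - y) z = 0"
      by simp
    then show "x = y" using nondeg[of "x - y"] by simp
  qed
  \<comment> \<open>finite dimension: an injective endomorphism of K^n is onto\<close>
  ultimately obtain x where "\<Phi> x = (\<chi> i. \<xi> (axis i 1))"
    unfolding lin_map_def by (metis vec.linear_inj_imp_surj surjD)
  then have "B x = \<xi>"
    by (intro lin_functional_eq_axisI lin \<xi>) (simp add: \<Phi>_def vec_eq_iff)
  then show ?thesis ..
qed

lemma bilinear_form_nondegenerate_iff_bij_dual:
  fixes B :: "'k::field^'n \<Rightarrow> 'k^'n \<Rightarrow> 'k"
  assumes B: "bilinear_form B"
  shows "nondegenerate B \<longleftrightarrow> bij_betw B UNIV dual_space"
proof -
  have range: "range B \<subseteq> dual_space" and add: "\<And>x y. B (x + y) = dual_add (B x) (B y)"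
    and scale: "\<And>c x. B (c *s x) = dual_scale c (B x)"
    using B by (auto simp: bilinear_form_iff_linear_to_dual)
  have inj_iff: "inj B \<longleftrightarrow> (\<forall>x. (\<forall>y. B x y = 0) \<longrightarrow> x = 0)"
  proof
    assume "inj B"
    moreover have "B 0 = (\<lambda>y. 0)"
      using scale[of 0 0] by (simp add: dual_scale_def)
    ultimately show "\<forall>x. (\<forall>y. B x y = 0) \<longrightarrow> x = 0"
      by (metis injD ext)
  next
    assume nondeg: "\<forall>x. (\<forall>y. B x y = 0) \<longrightarrow> x = 0"
    show "inj B"
    proof (rule injI)
      fix x y assume "B x = B y"
      then have "\<forall>z. B (x - y) z = 0"
        using add[of "x - y" y] by (simp add: dual_add_def fun_eq_iff)
      then show "x = y" using nondeg by auto
    qed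
  qed
  have right_nondeg: "y = 0" if onto: "range B = dual_space" and orth: "\<forall>x. B x y = 0" for y
  proof -
    have "y $ i = 0" for i
    proof -
      have "(\<lambda>v::'k^'n. v $ i) \<in> dual_space" by (simp add: dual_space_def lin_functional_iff)
      then obtain x where "B x = (\<lambda>v. v $ i)" using onto by (metis rangeE)
      then show ?thesis using orth by metis
    qed
    then show ?thesis by (simp add: vec_eq_iff)
  qed
  have surj: "range B = dual_space" if "\<forall>x. (\<forall>y. B x y = 0) \<longrightarrow> x = 0"
  proof
    show "dual_space \<subseteq> range B"
      using bilinear_form_represents_functional[OF B] that by (auto simp: dual_space_def)
  qed (fact range)
  show ?thesis
    unfolding nondegenerate_def bij_betw_def using inj_iff surj right_nondeg by blast
qed

lemma invariant_form_iff_RLstar: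
  "invariant_form m B \<longleftrightarrow> (\<forall>x y. B (m x y) = RLstar m x (B y))"
  unfolding invariant_form_def RLstar_def Rstar_def Lstar_def fun_eq_iff by blast

lemma skew_invariant_form_Rstar:
  assumes skew: "skew_symmetric B" and inv: "invariant_form m B"
  shows "B (m y x) = Rstar m x (B y)"
proof
  fix z
  have law: "B (m x y) z = B y (m z x) - B y (m x z)" for x y z
    using inv by (simp add: invariant_form_def)
  have "B y (m z x) = - B (m z x) y"
    using skew unfolding skew_symmetric_def by blast
  also have "\<dots> = B x (m z y) - B x (m y z)"
    by (simp add: law)
  also have "\<dots> = B (m y x) z"
    by (simp add: law)
  finally show "B (m y x) z = Rstar m x (B y) z"
    by (simp add: Rstar_def)
qed

lemma adjoint_nij_perm_rep:
  assumes perm: "perm_algebra m" and nij: "nijenhuis m N"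
  shows "nij_perm_rep (+) (*s) UNIV m N m (\<lambda>x v. m v x) N"
proof -
  have "lin_map (m x)" "lin_map (\<lambda>y. m y x)" "lin_map N" for x
    using perm nij by (auto simp: perm_algebra_def bilinear_prod_def nijenhuis_def)
  then have lin: "m x (v + w) = m x v + m x w" "m (v + w) x = m v x + m w x"
    "m x (c *s v) = c *s m x v" "m (c *s v) x = c *s m v x"
    "N (v + w) = N v + N w" "N (c *s v) = c *s N v" for x v w c
    by (simp_all add: lin_map_iff)
  have assoc: "m (m x y) z = m x (m y z)" and perm_law: "m x (m y z) = m x (m z y)" for x y z
    using perm by (auto simp: perm_algebra_def)
  have nij_law: "m (N x) (N y) + N (N (m x y)) = N (m (N x) y) + N (m x (N y))" for x y
    using nij by (simp add: nijenhuis_def)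
  have right_nij: "m (N v) (N x) + N (N (m v x)) = N (m v (N x)) + N (m (N v) x)" for x v
    using nij_law[of v x] by (simp add: add.commute)
  show ?thesis
    unfolding nij_perm_rep_def perm_rep_def
    by (simp add: lin assoc nij_law right_nij) (use perm_law in blast)
qed

lemma nij_perm_rep_transport:
  fixes \<psi> :: "'v \<Rightarrow> 'w"
  assumes rep: "nij_perm_rep add sc UNIV m N l r \<alpha>"
    and add: "\<And>v w. add' (\<psi> v) (\<psi> w) = \<psi> (add v w)"
    and scale: "\<And>c v. sc' c (\<psi> v) = \<psi> (sc c v)"
    and left: "\<And>x v. l' x (\<psi> v) = \<psi> (l x v)"
    and right: "\<And>x v. r' x (\<psi> v) = \<psi> (r x v)"
    and nij: "\<And>v. \<alpha>' (\<psi> v) = \<psi> (\<alpha> v)"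
  shows "nij_perm_rep add' sc' (range \<psi>) m N l' r' \<alpha>'"
  using rep unfolding nij_perm_rep_def perm_rep_def
  by (simp add: add scale left right nij)

theorem proposition2p19:
  fixes m :: "'k::field^'n \<Rightarrow> 'k^'n \<Rightarrow> 'k^'n" and N :: "'k^'n \<Rightarrow> 'k^'n"
  assumes "perm_algebra m" and "nijenhuis m N"
  shows "(\<forall>(B :: 'k^'n \<Rightarrow> 'k^'n \<Rightarrow> 'k) Nh.
            NF_perm_algebra m N B \<and> skew_symmetric B \<and> (\<forall>x y. B (N x) y = B x (Nh y)) \<longrightarrow>
              nij_perm_rep dual_add dual_scale dual_space m N (RLstar m) (Rstar m) (dual_map Nh) \<and>
              equiv_to_adjoint m N Nh)
       \<and> (\<forall>S. lin_map S \<and> admissible m N S \<and> equiv_to_adjoint m N S \<longrightarrow>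
              (\<exists>B :: 'k^'n \<Rightarrow> 'k^'n \<Rightarrow> 'k. NF_perm_algebra m N B \<and> (\<forall>x y. B (N x) y = B x (S y))))"
proof (intro conjI allI impI; elim conjE)
  fix B :: "'k^'n \<Rightarrow> 'k^'n \<Rightarrow> 'k" and Nh
  assume "NF_perm_algebra m N B" and skew: "skew_symmetric B"
    and adj: "\<forall>x y. B (N x) y = B x (Nh y)"
  then have B: "bilinear_form B" and inv: "invariant_form m B"
    and iso: "bij_betw B UNIV dual_space"
    by (auto simp: NF_perm_algebra_def bilinear_form_nondegenerate_iff_bij_dual)
  from B have lin: "\<forall>x y. B (x + y) = dual_add (B x) (B y)" "\<forall>c x. B (c *s x) = dual_scale c (B x)"
    by (auto simp: bilinear_form_iff_linear_to_dual)
  have intertwines: "\<forall>x y. B (m x y) = RLstar m x (B y) \<and> B (m y x) = Rstar m x (B y) \<and>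
      B (N x) = dual_map Nh (B x)"
    using inv skew_invariant_form_Rstar[OF skew inv] adj
    by (auto simp: invariant_form_iff_RLstar dual_map_def)
  have "nij_perm_rep dual_add dual_scale (range B) m N (RLstar m) (Rstar m) (dual_map Nh)"
    by (rule nij_perm_rep_transport[OF adjoint_nij_perm_rep[OF assms]])
      (metis intertwines lin)+
  then show "nij_perm_rep dual_add dual_scale dual_space m N (RLstar m) (Rstar m) (dual_map Nh)"
    using iso by (simp add: bij_betw_def)
  show "equiv_to_adjoint m N Nh"
    unfolding equiv_to_adjoint_def using lin iso intertwines by blast
next
  fix S :: "'k^'n \<Rightarrow> 'k^'n"
  assume "equiv_to_adjoint m N S"
  then obtain \<psi> :: "'k^'n \<Rightarrow> 'k^'n \<Rightarrow> 'k" where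
    lin: "\<forall>x y. \<psi> (x + y) = dual_add (\<psi> x) (\<psi> y)" "\<forall>c x. \<psi> (c *s x) = dual_scale c (\<psi> x)"
    and iso: "bij_betw \<psi> UNIV dual_space"
    and intertwines: "\<forall>x y. \<psi> (m x y) = RLstar m x (\<psi> y) \<and> \<psi> (m y x) = Rstar m x (\<psi> y) \<and>
      \<psi> (N x) = dual_map S (\<psi> x)"
    unfolding equiv_to_adjoint_def by blast
  have "bilinear_form \<psi>"
    using lin iso by (simp add: bilinear_form_iff_linear_to_dual bij_betw_def)
  then have "NF_perm_algebra m N \<psi>"
    using assms iso intertwines
    by (simp add: NF_perm_algebra_def bilinear_form_nondegenerate_iff_bij_dual invariant_form_iff_RLstar)
  moreover have "\<forall>x y. \<psi> (N x) y = \<psi> x (S y)"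
    using intertwines by (simp add: dual_map_def)
  ultimately show "\<exists>B. NF_perm_algebra m N B \<and> (\<forall>x y. B (N x) y = B x (S y))"
    by blast
qed

end
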